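(* Let $w$ be a nonnegative weight function on $\mathbb R$ with finite moments and infinite support, $w_1(t)=(1+t^2)w(t)$, and let $t_1,\dots,t_n$ and $\lambda_1,\dots,\lambda_n$ be the nodes and weights of the $n$-point Gaussian quadrature rule for $w$. Set $x_j=\sqrt{t_j^2+1}$, $y_j=t_j$, and define $$\langle f,g\rangle_n=\sum_{j=1}^n\lambda_j\big[f(x_j,y_j)g(x_j,y_j)+f(-x_j,y_j)g(-x_j,y_j)\big].$$ Then the $2n$ polynomials $Y_{k,1}(x,y)=p_k(w;y)$, $0\le k\le n-1$, and $Y_{k,2}(x,y)=x\,p_{k-1}(w_1;y)$, $1\le k\le n$, are mutually orthogonal with respect to $\langle\cdot,\cdot\rangle_n$.
   Context: $p_k(v;\cdot)$ denotes an orthogonal polynomial of degree $k$ with respect to the weight $v$ (any fixed nonzero normalization). The $n$-point Gaussian quadrature rule for $v$ is the rule $\int g\,v\approx\sum_j\lambda_jg(t_j)$ with nodes the zeros of $p_n(v)$, exact for all polynomials of degree at most $2n-1$. *)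

theory Defs
  imports "HOL-Analysis.Analysis" "HOL-Computational_Algebra.Polynomial"
begin

definition weight_fm :: "(real \<Rightarrow> real) \<Rightarrow> bool" where
  "weight_fm v \<longleftrightarrow> (\<forall>t. 0 \<le> v t) \<and> (\<forall>k::nat. integrable lborel (\<lambda>t. t ^ k * v t))"

definition weight_support :: "(real \<Rightarrow> real) \<Rightarrow> real set" where
  "weight_support v = {t. \<forall>e>0. (LINT x:{t - e<..<t + e}|lborel. v x) > 0}"

definition orth_poly :: "(real \<Rightarrow> real) \<Rightarrow> nat \<Rightarrow> real poly \<Rightarrow> bool" where
  "orth_poly v k p \<longleftrightarrow> p \<noteq> 0 \<and> degree p = k \<and>
     (\<forall>q. degree q < k \<longrightarrow> (LINT t|lborel. poly p t * poly q t * v t) = 0)"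

definition gauss_rule ::
  "(real \<Rightarrow> real) \<Rightarrow> nat \<Rightarrow> real poly \<Rightarrow> (nat \<Rightarrow> real) \<Rightarrow> (nat \<Rightarrow> real) \<Rightarrow> bool" where
  "gauss_rule v n pn t lam \<longleftrightarrow> inj_on t {..<n} \<and> t ` {..<n} = {x. poly pn x = 0} \<and>
     (\<forall>q. degree q < 2 * n \<longrightarrow> (LINT x|lborel. poly q x * v x) = (\<Sum>j<n. lam j * poly q (t j)))"

definition disc_ip ::
  "nat \<Rightarrow> (nat \<Rightarrow> real) \<Rightarrow> (nat \<Rightarrow> real) \<Rightarrow> (real \<Rightarrow> real \<Rightarrow> real) \<Rightarrow> (real \<Rightarrow> real \<Rightarrow> real) \<Rightarrow> real" where
  "disc_ip n t lam f g = (\<Sum>j<n. lam j *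
      (f (sqrt (t j ^ 2 + 1)) (t j) * g (sqrt (t j ^ 2 + 1)) (t j)
       + f (- sqrt (t j ^ 2 + 1)) (t j) * g (- sqrt (t j ^ 2 + 1)) (t j)))"

end

theory Submission
  imports Defs
begin

text \<open>The nodes lie on the hyperbola \<open>x\<^sup>2 = 1 + y\<^sup>2\<close>, symmetrically in \<open>x\<close>. A product
  \<open>p(y) \<cdot> x q(y)\<close> is odd in \<open>x\<close> and cancels in pairs. On the remaining products the factor
  \<open>x\<^sup>2\<close> becomes \<open>1 + y\<^sup>2\<close>, so each inner product is twice a Gaussian sum of a polynomial
  of degree at most \<open>2n - 1\<close>; exactness turns it into an integral against \<open>w\<close>, resp.
  \<open>w\<^sub>1 = (1 + y\<^sup>2) w\<close>, which vanishes by orthogonality.\<close>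

lemma disc_ip_even_odd: "disc_ip n t lam (\<lambda>x y. a y) (\<lambda>x y. x * b y) = 0"
  unfolding disc_ip_def by simp

lemma disc_ip_poly_poly:
  "disc_ip n t lam (\<lambda>x y. poly p y) (\<lambda>x y. poly q y) = 2 * (\<Sum>j<n. lam j * poly (p * q) (t j))"
  unfolding disc_ip_def by (simp add: sum_distrib_left algebra_simps)

lemma disc_ip_x_poly_x_poly:
  "disc_ip n t lam (\<lambda>x y. x * poly p y) (\<lambda>x y. x * poly q y)
     = 2 * (\<Sum>j<n. lam j * poly (p * q * [:1, 0, 1:]) (t j))"
proof -
  have "sqrt (s\<^sup>2 + 1) * sqrt (s\<^sup>2 + 1) = 1 + s * s" for s :: real
    by (simp add: power2_eq_square)
  then show ?thesis
    unfolding disc_ip_def sum_distrib_left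
    by (intro sum.cong refl) (simp add: algebra_simps)
qed

lemma gauss_rule_exact:
  assumes "gauss_rule v n pn t lam" "degree q < 2 * n"
  shows "(\<Sum>j<n. lam j * poly q (t j)) = (LINT x|lborel. poly q x * v x)"
  using assms unfolding gauss_rule_def by auto

lemma orth_poly_degree: "orth_poly v k p \<Longrightarrow> degree p = k"
  unfolding orth_poly_def by blast

lemma orth_poly_integral_eq_0:
  "orth_poly v k p \<Longrightarrow> degree q < k \<Longrightarrow> (LINT t|lborel. poly p t * poly q t * v t) = 0"
  unfolding orth_poly_def by blast

lemma disc_ip_orth_poly_eq_0:
  assumes "gauss_rule w n pn t lam" "orth_poly w k p" "orth_poly w l q" "k < n" "l < n" "k \<noteq> l"
  shows "disc_ip n t lam (\<lambda>x y. poly p y) (\<lambda>x y. poly q y) = 0"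
proof -
  have oriented: "(\<Sum>j<n. lam j * poly (p * q) (t j)) = 0"
    if "orth_poly w k p" "orth_poly w l q" "k < l" "l < n" for k l p q
  proof -
    have "degree (p * q) < 2 * n"
      using degree_mult_le[of p q] that orth_poly_degree by fastforce
    then have "(\<Sum>j<n. lam j * poly (p * q) (t j)) = (LINT x|lborel. poly (p * q) x * w x)"
      by (rule gauss_rule_exact[OF assms(1)])
    also have "\<dots> = (LINT x|lborel. poly q x * poly p x * w x)"
      by (simp add: mult.commute)
    also have "\<dots> = 0"
      using that orth_poly_integral_eq_0 orth_poly_degree by metis
    finally show ?thesis .
  qed
  have "(\<Sum>j<n. lam j * poly (p * q) (t j)) = 0"
    using oriented[of k p l q] oriented[of l q k p] assms(2-6)
    by (cases "k < l") (simp_all add: mult.commute)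
  then show ?thesis
    by (simp add: disc_ip_poly_poly)
qed

lemma disc_ip_x_orth_poly_eq_0:
  assumes "gauss_rule w n pn t lam"
    and "orth_poly (\<lambda>s. (1 + s\<^sup>2) * w s) k p" "orth_poly (\<lambda>s. (1 + s\<^sup>2) * w s) l q"
    and "k < n" "l < n" "k \<noteq> l"
  shows "disc_ip n t lam (\<lambda>x y. x * poly p y) (\<lambda>x y. x * poly q y) = 0"
proof -
  have oriented: "(\<Sum>j<n. lam j * poly (p * q * [:1, 0, 1:]) (t j)) = 0"
    if "orth_poly (\<lambda>s. (1 + s\<^sup>2) * w s) k p" "orth_poly (\<lambda>s. (1 + s\<^sup>2) * w s) l q"
      and "k < l" "l < n" for k l p q
  proof -
    have "degree (p * q * [:1, 0, 1:]) < 2 * n"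
      using degree_mult_le[of "p * q" "[:1, 0, 1:]"] degree_mult_le[of p q] that orth_poly_degree
      by fastforce
    then have "(\<Sum>j<n. lam j * poly (p * q * [:1, 0, 1:]) (t j))
        = (LINT x|lborel. poly (p * q * [:1, 0, 1:]) x * w x)"
      by (rule gauss_rule_exact[OF assms(1)])
    also have "\<dots> = (LINT x|lborel. poly q x * poly p x * ((1 + x\<^sup>2) * w x))"
      by (simp add: algebra_simps power2_eq_square)
    also have "\<dots> = 0"
      using that orth_poly_integral_eq_0 orth_poly_degree by metis
    finally show ?thesis .
  qed
  have "(\<Sum>j<n. lam j * poly (p * q * [:1, 0, 1:]) (t j)) = 0"
    using oriented[of k p l q] oriented[of l q k p] assms(2-6)
    by (cases "k < l") (simp_all add: mult.commute)
  then show ?thesis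
    by (simp add: disc_ip_x_poly_x_poly)
qed

theorem corollary8p12:
  fixes w :: "real \<Rightarrow> real" and n :: nat
    and P Q :: "nat \<Rightarrow> real poly" and t lam :: "nat \<Rightarrow> real"
  assumes "weight_fm w"
    and "infinite (weight_support w)"
    and "\<And>k. k \<le> n \<Longrightarrow> orth_poly w k (P k)"
    and "\<And>k. k < n \<Longrightarrow> orth_poly (\<lambda>s. (1 + s\<^sup>2) * w s) k (Q k)"
    and "gauss_rule w n (P n) t lam"
  shows "(\<forall>k<n. \<forall>l<n. k \<noteq> l \<longrightarrow>
            disc_ip n t lam (\<lambda>x y. poly (P k) y) (\<lambda>x y. poly (P l) y) = 0)
       \<and> (\<forall>k\<in>{1..n}. \<forall>l\<in>{1..n}. k \<noteq> l \<longrightarrow>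
            disc_ip n t lam (\<lambda>x y. x * poly (Q (k - 1)) y) (\<lambda>x y. x * poly (Q (l - 1)) y) = 0)
       \<and> (\<forall>k<n. \<forall>l\<in>{1..n}.
            disc_ip n t lam (\<lambda>x y. poly (P k) y) (\<lambda>x y. x * poly (Q (l - 1)) y) = 0)"
proof (intro conjI ballI allI impI)
  show "disc_ip n t lam (\<lambda>x y. poly (P k) y) (\<lambda>x y. poly (P l) y) = 0"
    if "k < n" "l < n" "k \<noteq> l" for k l
    using that by (auto intro!: disc_ip_orth_poly_eq_0[OF assms(5)] assms(3))
  show "disc_ip n t lam (\<lambda>x y. x * poly (Q (k - 1)) y) (\<lambda>x y. x * poly (Q (l - 1)) y) = 0"
    if "k \<in> {1..n}" "l \<in> {1..n}" "k \<noteq> l" for k l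
    using that by (auto intro!: disc_ip_x_orth_poly_eq_0[OF assms(5)] assms(4))
  show "disc_ip n t lam (\<lambda>x y. poly (P k) y) (\<lambda>x y. x * poly (Q (l - 1)) y) = 0" for k l
    by (rule disc_ip_even_odd)
qed

end
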